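(* Let $1\le p<\infty$, $N,s,N^*\in\mathbb N$ with $s\le N^d$ and $N^*\ge4N$, $r>0$, $c_0>0$, and $f\in Lip^{(N,s,r,c_0)}$. Then for every $0<\tau\le\frac{s}{2N^d(N^* )^{1+pr}}$, $$\|f-N_{2,N^*,\tau}\|_{L^p(\mathbb I^d)}\le c_2(N^* )^{-r}\Big(\frac{s}{N^d}\Big)^{1/p}\qquad\text{and}\qquad\|N_{2,N^*,\tau}\|_{L^\infty(\mathbb I^d)}\le c_3,$$ where $c_2,c_3$ are constants depending only on $d$, $r$, $c_0$ and $\|f\|_{L^\infty(\mathbb I^d)}$.
   Context: $\mathbb I^d=[0,1]^d$, partitioned into $N^d$ congruent sub-cubes of side $1/N$; $f$ is $s$-sparse in $N^d$ partitions if its support lies in the union of at most $s$ of them. With $r=u+v$, $u\in\mathbb N_0$, $0<v\le1$, $Lip^{(r,c_0)}$ is the set of $u$ times differentiable $f:\mathbb I^d\to\mathbb R$ with $|\partial^\alpha f(x)-\partial^\alpha f(x')|\le c_0\|x-x'\|^v$ for all $|\alpha|=u$; $Lip^{(N,s,r,c_0)}$ is the set of its $s$-sparse members. Partition $\mathbb I^d$ into $(N^* )^d$ congruent sub-cubes $B_1,\dots,B_{(N^* )^d}$ of side $1/N^*$ with centers $\xi_1,\dots,\xi_{(N^* )^d}$. For $x_0\in\mathbb R^d$, $p_{u,x_0,f}(x)=\sum_{|\alpha|\le u}\frac{\partial^\alpha f(x_0)}{\alpha!}(x-x_0)^\alpha$ is the Taylor polynomial of degree $u$ of $f$ at $x_0$.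 With $\sigma(t)=\max\{t,0\}$, $T_{\tau,a,b}(t)=\frac1\tau\{\sigma(t-a+\tau)-\sigma(t-a)-\sigma(t-b)+\sigma(t-b-\tau)\}$ and $N_{a,b,\tau}(x)=\sigma\big(\sum_{j=1}^dT_{\tau,a,b}(x^{(j)})-(d-1)\big)$, set $N_{1,N^*,\xi,\tau}(x)=N_{-1/(2N^* ),1/(2N^* ),\tau}(x-\xi)$ and $$N_{2,N^*,\tau}(x)=\sum_{k=1}^{(N^* )^d}p_{u,\xi_k,f}(x)\,N_{1,N^*,\xi_k,\tau}(x).$$ *)

theory Defs
  imports "HOL-Analysis.Analysis"
begin

definition unit_cube :: "(real^'d) set" where
  "unit_cube = {x. \<forall>i. 0 \<le> x$i \<and> x$i \<le> 1}"

definition cube_idx :: "nat \<Rightarrow> ('d::finite \<Rightarrow> nat) set" where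
  "cube_idx N = {k. \<forall>i. k i < N}"

definition subcube :: "nat \<Rightarrow> ('d::finite \<Rightarrow> nat) \<Rightarrow> (real^'d) set" where
  "subcube N k = {x. \<forall>i. real (k i) / real N \<le> x$i \<and> x$i \<le> (real (k i) + 1) / real N}"

definition center :: "nat \<Rightarrow> ('d::finite \<Rightarrow> nat) \<Rightarrow> real^'d" where
  "center N k = (\<chi> i. (real (k i) + 1/2) / real N)"

definition sparse :: "nat \<Rightarrow> nat \<Rightarrow> (real^'d::finite \<Rightarrow> real) \<Rightarrow> bool" where
  "sparse N s f \<longleftrightarrow> (\<exists>S \<subseteq> cube_idx N. card S \<le> s \<and>
      (\<forall>x\<in>unit_cube. f x \<noteq> 0 \<longrightarrow> x \<in> (\<Union>k\<in>S. subcube N k)))"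

text \<open>r = u + v with u a natural number and 0 < v \<le> 1.\<close>
definition ipart :: "real \<Rightarrow> nat" where
  "ipart r = nat (\<lceil>r\<rceil> - 1)"

definition fpart :: "real \<Rightarrow> real" where
  "fpart r = r - real (ipart r)"

definition mi_order :: "('d::finite \<Rightarrow> nat) \<Rightarrow> nat" where
  "mi_order \<alpha> = (\<Sum>i\<in>UNIV. \<alpha> i)"

text \<open>D is the family of partial derivatives of f on I^d up to order u:
  D 0 = f on I^d and D (\<alpha> + e_i) is the partial derivative of D \<alpha> in direction i
  (one-sided at the boundary of I^d) whenever |\<alpha>| < u.\<close>
definition partial_derivs :: "nat \<Rightarrow> (real^'d::finite \<Rightarrow> real)
     \<Rightarrow> (('d \<Rightarrow> nat) \<Rightarrow> real^'d \<Rightarrow> real) \<Rightarrow> bool" where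
  "partial_derivs u f D \<longleftrightarrow>
     (\<forall>x\<in>unit_cube. D (\<lambda>_. 0) x = f x) \<and>
     (\<forall>\<alpha> i. mi_order \<alpha> < u \<longrightarrow> (\<forall>x\<in>unit_cube.
        ((\<lambda>t. D \<alpha> (x + t *\<^sub>R axis i 1)) has_real_derivative D (\<alpha>(i := Suc (\<alpha> i))) x)
          (at 0 within {t. x + t *\<^sub>R axis i 1 \<in> unit_cube})))"

definition Lip_derivs :: "real \<Rightarrow> real \<Rightarrow> (real^'d::finite \<Rightarrow> real)
     \<Rightarrow> (('d \<Rightarrow> nat) \<Rightarrow> real^'d \<Rightarrow> real) \<Rightarrow> bool" where
  "Lip_derivs r c0 f D \<longleftrightarrow> partial_derivs (ipart r) f D \<and>
     (\<forall>\<alpha>. mi_order \<alpha> = ipart r \<longrightarrow> (\<forall>x\<in>unit_cube. \<forall>x'\<in>unit_cube.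
        \<bar>D \<alpha> x - D \<alpha> x'\<bar> \<le> c0 * norm (x - x') powr fpart r))"

definition taylor_poly :: "nat \<Rightarrow> (('d::finite \<Rightarrow> nat) \<Rightarrow> real^'d \<Rightarrow> real)
     \<Rightarrow> real^'d \<Rightarrow> real^'d \<Rightarrow> real" where
  "taylor_poly u D x0 x = (\<Sum>\<alpha>\<in>{\<alpha>. mi_order \<alpha> \<le> u}.
      D \<alpha> x0 / (\<Prod>i\<in>UNIV. fact (\<alpha> i)) * (\<Prod>i\<in>UNIV. (x$i - x0$i) ^ \<alpha> i))"

definition relu :: "real \<Rightarrow> real" where
  "relu t = max t 0"

definition trap :: "real \<Rightarrow> real \<Rightarrow> real \<Rightarrow> real \<Rightarrow> real" where
  "trap \<tau> a b t = (relu (t - a + \<tau>) - relu (t - a) - relu (t - b) + relu (t - b - \<tau>)) / \<tau>"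

definition Nabt :: "real \<Rightarrow> real \<Rightarrow> real \<Rightarrow> real^'d::finite \<Rightarrow> real" where
  "Nabt a b \<tau> x = relu ((\<Sum>j\<in>UNIV. trap \<tau> a b (x$j)) - (real CARD('d) - 1))"

definition N1 :: "nat \<Rightarrow> real^'d::finite \<Rightarrow> real \<Rightarrow> real^'d \<Rightarrow> real" where
  "N1 Ns \<xi> \<tau> x = Nabt (-1 / (2 * real Ns)) (1 / (2 * real Ns)) \<tau> (x - \<xi>)"

definition N2 :: "nat \<Rightarrow> (('d::finite \<Rightarrow> nat) \<Rightarrow> real^'d \<Rightarrow> real) \<Rightarrow> nat \<Rightarrow> real
     \<Rightarrow> real^'d \<Rightarrow> real" where
  "N2 u D Ns \<tau> x = (\<Sum>k\<in>cube_idx Ns.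
      taylor_poly u D (center Ns k) x * N1 Ns (center Ns k) \<tau> x)"

definition Lp_norm_cube :: "real \<Rightarrow> (real^'d::finite \<Rightarrow> real) \<Rightarrow> real" where
  "Lp_norm_cube p g = (LINT x:unit_cube|lborel. \<bar>g x\<bar> powr p) powr (1 / p)"

end

theory Submission
  imports Defs
begin

text \<open>On each cube of the grid of mesh \<open>1/Ns\<close>, \<open>N2\<close> is the Taylor polynomial \<open>P\<^sub>k\<close> of \<open>f\<close> at the
  center, multiplied by a trapezoidal bump \<open>N1\<^sub>k\<close> that is 1 on the cube and vanishes outside its
  \<open>\<tau>\<close>-neighbourhood; at most \<open>2^d\<close> bumps are active at any point. Split
  \<open>f - N2 = f (1 - \<Sum>\<^sub>k N1\<^sub>k) + \<Sum>\<^sub>k N1\<^sub>k (f - P\<^sub>k)\<close>. The second term is bounded by the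
  Taylor remainder, of order \<open>Ns^(-r)\<close>, and vanishes at distance more than \<open>2/Ns\<close> from the support
  of \<open>f\<close>, a set of measure \<open>O(s/N^d)\<close>. The first term is bounded by a multiple of \<open>sup |f|\<close>
  and vanishes outside the support cubes and off the \<open>\<tau>\<close>-neighbourhood of the grid hyperplanes,
  a set of measure \<open>O(Ns \<tau> s/N^d)\<close>, which the choice of \<open>\<tau>\<close> makes \<open>O(Ns^(-p r) s/N^d)\<close>.
  Integrating the \<open>p\<close>-th power of the two bounds gives the \<open>L^p\<close> estimate. The Taylor remainder
  estimate is proved by induction on the order, applying the mean value theorem along
  axis-parallel staircases inside the cube.\<close>

section \<open>Taylor polynomials of partial derivatives\<close>

lemma finite_mi_order_le: "finite {\<beta>::'d::finite \<Rightarrow> nat. mi_order \<beta> \<le> m}"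
proof (rule finite_subset)
  show "{\<beta>::'d \<Rightarrow> nat. mi_order \<beta> \<le> m} \<subseteq> PiE UNIV (\<lambda>_. {..m})"
  proof
    fix \<beta> :: "'d\<Rightarrow>nat" assume "\<beta> \<in> {\<beta>. mi_order \<beta> \<le> m}"
    then have "\<beta> i \<le> m" for i
      unfolding mi_order_def using member_le_sum[of i UNIV \<beta>] by auto
    then show "\<beta> \<in> PiE UNIV (\<lambda>_. {..m})" by auto
  qed
qed (rule finite_PiE; simp)

lemma mi_order_fun_upd_Suc: "mi_order (\<alpha>(j := Suc (\<alpha> j))) = Suc (mi_order \<alpha>)"
  unfolding mi_order_def by (simp add: sum.remove[of UNIV j])

lemma mi_order_eq_0_iff: "mi_order \<beta> = 0 \<longleftrightarrow> \<beta> = (\<lambda>_. 0)"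
  unfolding mi_order_def by (auto simp: fun_eq_iff)

lemma sum_mi_order_le_Suc_shift:
  fixes h :: "('d::finite \<Rightarrow> nat) \<Rightarrow> 'a::comm_monoid_add"
  assumes "\<And>\<beta>. \<beta> j = 0 \<Longrightarrow> h \<beta> = 0"
  shows "(\<Sum>\<beta>\<in>{\<beta>. mi_order \<beta> \<le> Suc m}. h \<beta>) = (\<Sum>\<gamma>\<in>{\<gamma>. mi_order \<gamma> \<le> m}. h (\<gamma>(j := Suc (\<gamma> j))))"
proof -
  have "(\<Sum>\<beta>\<in>{\<beta>. mi_order \<beta> \<le> Suc m}. h \<beta>) = (\<Sum>\<beta>\<in>{\<beta>. mi_order \<beta> \<le> Suc m \<and> \<beta> j \<noteq> 0}. h \<beta>)"
    using assms by (intro sum.mono_neutral_right finite_mi_order_le) auto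
  also have "\<dots> = (\<Sum>\<gamma>\<in>{\<gamma>. mi_order \<gamma> \<le> m}. h (\<gamma>(j := Suc (\<gamma> j))))"
  proof (rule sum.reindex_bij_witness[of _ "\<lambda>\<gamma>. \<gamma>(j := Suc (\<gamma> j))" "\<lambda>\<beta>. \<beta>(j := \<beta> j - 1)"])
    fix \<beta> :: "'d \<Rightarrow> nat" assume \<beta>: "\<beta> \<in> {\<beta>. mi_order \<beta> \<le> Suc m \<and> \<beta> j \<noteq> 0}"
    then show incr_decr: "(\<beta>(j := \<beta> j - 1))(j := Suc ((\<beta>(j := \<beta> j - 1)) j)) = \<beta>" by auto
    show "\<beta>(j := \<beta> j - 1) \<in> {\<gamma>. mi_order \<gamma> \<le> m}"
      using \<beta> mi_order_fun_upd_Suc[of "\<beta>(j := \<beta> j - 1)" j] incr_decr by simp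
  next
    fix \<gamma> :: "'d \<Rightarrow> nat" assume "\<gamma> \<in> {\<gamma>. mi_order \<gamma> \<le> m}"
    then show "(\<gamma>(j := Suc (\<gamma> j)))(j := (\<gamma>(j := Suc (\<gamma> j))) j - 1) = \<gamma>"
      and "\<gamma>(j := Suc (\<gamma> j)) \<in> {\<beta>. mi_order \<beta> \<le> Suc m \<and> \<beta> j \<noteq> 0}"
      by (simp_all add: mi_order_fun_upd_Suc)
  next
    fix \<beta> :: "'d \<Rightarrow> nat" assume "\<beta> \<in> {\<beta>. mi_order \<beta> \<le> Suc m \<and> \<beta> j \<noteq> 0}"
    then show "h ((\<beta>(j := \<beta> j - 1))(j := Suc ((\<beta>(j := \<beta> j - 1)) j))) = h \<beta>" by simp
  qed
  finally show ?thesis .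
qed

definition deriv_taylor_poly :: "nat \<Rightarrow> (('d::finite \<Rightarrow> nat) \<Rightarrow> real^'d \<Rightarrow> real) \<Rightarrow> ('d \<Rightarrow> nat)
     \<Rightarrow> real^'d \<Rightarrow> real^'d \<Rightarrow> real" where
  "deriv_taylor_poly m D \<alpha> \<xi> x = (\<Sum>\<beta>\<in>{\<beta>. mi_order \<beta> \<le> m}.
      D (\<lambda>i. \<alpha> i + \<beta> i) \<xi> / (\<Prod>i\<in>UNIV. fact (\<beta> i)) * (\<Prod>i\<in>UNIV. (x$i - \<xi>$i) ^ \<beta> i))"

lemma taylor_poly_eq_deriv_taylor_poly: "taylor_poly m D \<xi> x = deriv_taylor_poly m D (\<lambda>_. 0) \<xi> x"
  unfolding taylor_poly_def deriv_taylor_poly_def by simp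

lemma deriv_taylor_poly_0:
  fixes D :: "('d::finite \<Rightarrow> nat) \<Rightarrow> real^'d \<Rightarrow> real"
  shows "deriv_taylor_poly 0 D \<alpha> \<xi> x = D \<alpha> \<xi>"
proof -
  have "{\<beta>::'d\<Rightarrow>nat. mi_order \<beta> \<le> 0} = {\<lambda>_. 0}" using mi_order_eq_0_iff by auto
  then show ?thesis unfolding deriv_taylor_poly_def by simp
qed

lemma deriv_taylor_poly_at_center:
  fixes D :: "('d::finite \<Rightarrow> nat) \<Rightarrow> real^'d \<Rightarrow> real"
  shows "deriv_taylor_poly m D \<alpha> \<xi> \<xi> = D \<alpha> \<xi>"
proof -
  have "deriv_taylor_poly m D \<alpha> \<xi> \<xi> = (\<Sum>\<beta>\<in>{\<beta>::'d \<Rightarrow> nat. mi_order \<beta> \<le> m}. if \<beta> = (\<lambda>_. 0) then D \<alpha> \<xi> else 0)"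
    unfolding deriv_taylor_poly_def
  proof (rule sum.cong[OF refl])
    fix \<beta> :: "'d \<Rightarrow> nat"
    show "D (\<lambda>i. \<alpha> i + \<beta> i) \<xi> / (\<Prod>i\<in>UNIV. fact (\<beta> i)) * (\<Prod>i\<in>UNIV. (\<xi>$i - \<xi>$i) ^ \<beta> i)
        = (if \<beta> = (\<lambda>_. 0) then D \<alpha> \<xi> else 0)"
      by (cases "\<beta> = (\<lambda>_. 0)") (auto simp: fun_eq_iff)
  qed
  also have "\<dots> = D \<alpha> \<xi>"
    using finite_mi_order_le[of m] by (subst sum.delta) (auto simp: mi_order_def)
  finally show ?thesis .
qed

lemma monomial_has_axis_derivative:
  fixes y \<xi> :: "real^'d::finite" and \<beta> :: "'d \<Rightarrow> nat"
  shows "((\<lambda>t. \<Prod>i\<in>UNIV. ((y + t *\<^sub>R axis j 1)$i - \<xi>$i) ^ \<beta> i) has_real_derivative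
     real (\<beta> j) * (\<Prod>i\<in>UNIV. (y$i - \<xi>$i) ^ (\<beta>(j := \<beta> j - 1)) i)) (at 0)"
proof -
  define C where "C = (\<Prod>i\<in>UNIV-{j}. (y$i - \<xi>$i) ^ \<beta> i)"
  have "(\<Prod>i\<in>UNIV. ((y + t *\<^sub>R axis j 1)$i - \<xi>$i) ^ \<beta> i) = (y$j + t - \<xi>$j) ^ \<beta> j * C" for t
    unfolding C_def by (subst prod.remove[of _ j]) (auto simp: axis_def intro!: prod.cong)
  moreover have "(\<Prod>i\<in>UNIV. (y$i - \<xi>$i) ^ (\<beta>(j := \<beta> j - 1)) i) = (y$j - \<xi>$j) ^ (\<beta> j - 1) * C"
    unfolding C_def by (subst prod.remove[of _ j]) (auto intro!: prod.cong)
  moreover have "((\<lambda>t. (y$j + t - \<xi>$j) ^ \<beta> j * C) has_real_derivative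
      real (\<beta> j) * (y$j + 0 - \<xi>$j) ^ (\<beta> j - 1) * 1 * C) (at 0)"
    by (intro derivative_eq_intros) auto
  ultimately show ?thesis by (simp add: mult.assoc)
qed

lemma deriv_taylor_poly_has_axis_derivative:
  fixes y \<xi> :: "real^'d::finite"
  shows "((\<lambda>t. deriv_taylor_poly (Suc m) D \<alpha> \<xi> (y + t *\<^sub>R axis j 1)) has_real_derivative
     deriv_taylor_poly m D (\<alpha>(j := Suc (\<alpha> j))) \<xi> y) (at 0)"
proof -
  define c where "c \<beta> = D (\<lambda>i. \<alpha> i + \<beta> i) \<xi> / (\<Prod>i\<in>UNIV. fact (\<beta> i))" for \<beta>
  define g where "g \<beta> = c \<beta> * (real (\<beta> j) * (\<Prod>i\<in>UNIV. (y$i - \<xi>$i) ^ (\<beta>(j := \<beta> j - 1)) i))" for \<beta>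
  have "((\<lambda>t. deriv_taylor_poly (Suc m) D \<alpha> \<xi> (y + t *\<^sub>R axis j 1)) has_real_derivative
      (\<Sum>\<beta>\<in>{\<beta>. mi_order \<beta> \<le> Suc m}. g \<beta>)) (at 0)"
    unfolding deriv_taylor_poly_def g_def c_def by (intro DERIV_sum DERIV_cmult monomial_has_axis_derivative)
  also have "(\<Sum>\<beta>\<in>{\<beta>. mi_order \<beta> \<le> Suc m}. g \<beta>) = (\<Sum>\<gamma>\<in>{\<gamma>. mi_order \<gamma> \<le> m}. g (\<gamma>(j := Suc (\<gamma> j))))"
    by (rule sum_mi_order_le_Suc_shift) (simp add: g_def)
  also have "\<dots> = deriv_taylor_poly m D (\<alpha>(j := Suc (\<alpha> j))) \<xi> y"
    unfolding deriv_taylor_poly_def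
  proof (rule sum.cong[OF refl])
    fix \<gamma> :: "'d \<Rightarrow> nat"
    have "(\<Prod>i\<in>UNIV. fact ((\<gamma>(j := Suc (\<gamma> j))) i) :: real) = real (Suc (\<gamma> j)) * (\<Prod>i\<in>UNIV. fact (\<gamma> i))"
      by (simp add: prod.remove[of UNIV j] del: of_nat_Suc)
    moreover have "(\<lambda>i. \<alpha> i + (\<gamma>(j := Suc (\<gamma> j))) i) = (\<lambda>i. (\<alpha>(j := Suc (\<alpha> j))) i + \<gamma> i)" by auto
    moreover have "(\<Prod>i\<in>UNIV. fact (\<gamma> i) :: real) \<noteq> 0" by (simp add: prod_zero_iff)
    ultimately show "g (\<gamma>(j := Suc (\<gamma> j))) = D (\<lambda>i. (\<alpha>(j := Suc (\<alpha> j))) i + \<gamma> i) \<xi> / (\<Prod>i\<in>UNIV. fact (\<gamma> i)) *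
          (\<Prod>i\<in>UNIV. (y $ i - \<xi> $ i) ^ \<gamma> i)"
      unfolding g_def c_def by (simp add: field_simps del: of_nat_Suc)
  qed
  finally show ?thesis .
qed

section \<open>Taylor remainder on the unit cube\<close>

lemma has_real_derivative_axis_line_at:
  fixes G :: "real^'d::finite \<Rightarrow> real"
  assumes deriv: "\<And>w. w \<in> unit_cube \<Longrightarrow> ((\<lambda>t. G (w + t *\<^sub>R axis j 1)) has_real_derivative G' w)
              (at 0 within {t. w + t *\<^sub>R axis j 1 \<in> unit_cube})"
    and "y + t0 *\<^sub>R axis j 1 \<in> unit_cube"
  shows "((\<lambda>t. G (y + t *\<^sub>R axis j 1)) has_real_derivative G' (y + t0 *\<^sub>R axis j 1))
      (at t0 within {t. y + t *\<^sub>R axis j 1 \<in> unit_cube})"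
proof -
  define w where "w = y + t0 *\<^sub>R axis j 1"
  define S where "S = {t. y + t *\<^sub>R axis j 1 \<in> unit_cube}"
  have shift: "w + (t - t0) *\<^sub>R axis j 1 = y + t *\<^sub>R axis j 1" for t
    unfolding w_def by (simp add: algebra_simps)
  have "(\<lambda>t. t - t0) ` S = {s. w + s *\<^sub>R axis j 1 \<in> unit_cube}"
    using shift[of "_ + t0"] by (force simp: S_def shift)
  then have "((\<lambda>s. G (w + s *\<^sub>R axis j 1)) has_real_derivative G' w) (at ((\<lambda>t. t - t0) t0) within (\<lambda>t. t - t0) ` S)"
    using deriv assms(2) unfolding w_def by simp
  moreover have "((\<lambda>t. t - t0) has_real_derivative 1) (at t0 within S)"
    by (intro derivative_eq_intros) auto
  ultimately have "((\<lambda>s. G (w + s *\<^sub>R axis j 1)) \<circ> (\<lambda>t. t - t0) has_real_derivative G' w) (at t0 within S)"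
    using DERIV_image_chain by fastforce
  then show ?thesis unfolding S_def w_def by (simp add: o_def shift[unfolded w_def])
qed

lemma axis_segment_mean_value:
  fixes G :: "real^'d::finite \<Rightarrow> real"
  assumes deriv: "\<And>w. w \<in> unit_cube \<Longrightarrow> ((\<lambda>t. G (w + t *\<^sub>R axis j 1)) has_real_derivative G' w)
              (at 0 within {t. w + t *\<^sub>R axis j 1 \<in> unit_cube})"
    and segment: "\<And>t. t \<in> closed_segment 0 \<delta> \<Longrightarrow> y + t *\<^sub>R axis j 1 \<in> unit_cube"
    and bound: "\<And>t. t \<in> closed_segment 0 \<delta> \<Longrightarrow> \<bar>G' (y + t *\<^sub>R axis j 1)\<bar> \<le> B"
  shows "\<bar>G (y + \<delta> *\<^sub>R axis j 1) - G y\<bar> \<le> B * \<bar>\<delta>\<bar>"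
proof -
  have "((\<lambda>t. G (y + t *\<^sub>R axis j 1)) has_real_derivative G' (y + t *\<^sub>R axis j 1)) (at t within closed_segment 0 \<delta>)"
    if "t \<in> closed_segment 0 \<delta>" for t
    using has_real_derivative_axis_line_at[OF deriv segment[OF that]]
    by (rule has_field_derivative_subset) (auto intro: segment)
  then have "norm (G (y + \<delta> *\<^sub>R axis j 1) - G (y + 0 *\<^sub>R axis j 1)) \<le> B * norm (\<delta> - 0)"
    by (rule field_differentiable_bound[OF convex_closed_segment]) (auto simp: bound ends_in_segment)
  then show ?thesis by simp
qed

lemma norm_le_of_abs_components_le:
  fixes a b :: "real^'d::finite"
  assumes "\<And>i. \<bar>a$i\<bar> \<le> \<bar>b$i\<bar>"
  shows "norm a \<le> norm b"
  unfolding norm_vec_def by (rule L2_set_mono) (use assms in auto)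

lemma between_components_in_unit_cube:
  fixes w x \<xi> :: "real^'d::finite"
  assumes x: "x \<in> unit_cube" and \<xi>: "\<xi> \<in> unit_cube" and w: "\<And>i. w$i \<in> closed_segment (\<xi>$i) (x$i)"
  shows "w \<in> unit_cube \<and> norm (w - \<xi>) \<le> norm (x - \<xi>)"
proof -
  have "0 \<le> w$i \<and> w$i \<le> 1 \<and> \<bar>(w - \<xi>)$i\<bar> \<le> \<bar>(x - \<xi>)$i\<bar>" for i
  proof -
    have "0 \<le> x$i \<and> x$i \<le> 1" "0 \<le> \<xi>$i \<and> \<xi>$i \<le> 1" using x \<xi> unfolding unit_cube_def by auto
    with w[of i] show ?thesis unfolding closed_segment_eq_real_ivl by (auto split: if_splits)
  qed
  then show ?thesis unfolding unit_cube_def by (auto intro: norm_le_of_abs_components_le)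
qed

text \<open>Walk from \<open>\<xi>\<close> to \<open>x\<close> along a staircase of axis-parallel segments, changing one coordinate at a time;
  every point of the staircase stays in the cube and no farther from \<open>\<xi>\<close> than \<open>x\<close>.\<close>
lemma cube_mean_value_bound:
  fixes G :: "real^'d::finite \<Rightarrow> real" and G' :: "'d \<Rightarrow> real^'d \<Rightarrow> real"
  assumes deriv: "\<And>j w. w \<in> unit_cube \<Longrightarrow> ((\<lambda>t. G (w + t *\<^sub>R axis j 1)) has_real_derivative G' j w)
              (at 0 within {t. w + t *\<^sub>R axis j 1 \<in> unit_cube})"
    and bound: "\<And>j w. w \<in> unit_cube \<Longrightarrow> norm (w - \<xi>) \<le> norm (x - \<xi>) \<Longrightarrow> \<bar>G' j w\<bar> \<le> B"
    and \<xi>: "\<xi> \<in> unit_cube" and x: "x \<in> unit_cube"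
  shows "\<bar>G x - G \<xi>\<bar> \<le> real CARD('d) * B * norm (x - \<xi>)"
proof -
  define z where "z J = (\<chi> i. if i \<in> J then x$i else \<xi>$i)" for J
  have B: "0 \<le> B" using bound[OF \<xi>, of undefined] by simp
  have staircase: "\<bar>G (z J) - G \<xi>\<bar> \<le> real (card J) * (B * norm (x - \<xi>))" for J
  proof (induction J rule: infinite_finite_induct)
    case (infinite J)
    then show ?case by simp
  next
    case empty
    have "z {} = \<xi>" unfolding z_def by (simp add: vec_eq_iff)
    then show ?case by simp
  next
    case (insert j J)
    define \<delta> where "\<delta> = x$j - \<xi>$j"
    have "(z J + t *\<^sub>R axis j 1)$i \<in> closed_segment (\<xi>$i) (x$i)" if "t \<in> closed_segment 0 \<delta>" for t i
      using that insert.hyps unfolding z_def \<delta>_def closed_segment_eq_real_ivl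
      by (auto simp: axis_def split: if_splits)
    then have segment: "z J + t *\<^sub>R axis j 1 \<in> unit_cube \<and> norm (z J + t *\<^sub>R axis j 1 - \<xi>) \<le> norm (x - \<xi>)"
      if "t \<in> closed_segment 0 \<delta>" for t
      using that by (intro between_components_in_unit_cube[OF x \<xi>])
    have "\<bar>G (z J + \<delta> *\<^sub>R axis j 1) - G (z J)\<bar> \<le> B * \<bar>\<delta>\<bar>"
      by (rule axis_segment_mean_value[OF deriv]) (use segment bound in auto)
    also have "\<dots> \<le> B * norm (x - \<xi>)"
      using component_le_norm_cart[of "x - \<xi>" j] B unfolding \<delta>_def by (intro mult_left_mono) auto
    also have "z J + \<delta> *\<^sub>R axis j 1 = z (insert j J)"
      using insert.hyps unfolding z_def \<delta>_def by (auto simp: vec_eq_iff axis_def)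
    finally have "\<bar>G (z (insert j J)) - G (z J)\<bar> \<le> B * norm (x - \<xi>)" .
    then show ?case using insert.IH insert.hyps by (simp add: algebra_simps)
  qed
  have "z UNIV = x" unfolding z_def by (simp add: vec_eq_iff)
  then show ?thesis using staircase[of UNIV] by (simp add: mult.assoc)
qed

lemma taylor_remainder_bound:
  fixes f :: "real^'d::finite \<Rightarrow> real" and D :: "('d \<Rightarrow> nat) \<Rightarrow> real^'d \<Rightarrow> real"
  assumes pd: "partial_derivs u f D"
    and hoelder: "\<And>\<alpha> x x'. mi_order \<alpha> = u \<Longrightarrow> x \<in> unit_cube \<Longrightarrow> x' \<in> unit_cube \<Longrightarrow>
                 \<bar>D \<alpha> x - D \<alpha> x'\<bar> \<le> c0 * norm (x - x') powr v"
    and v: "0 \<le> v" and c0: "0 \<le> c0"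
    and \<xi>: "\<xi> \<in> unit_cube"
  shows "mi_order \<alpha> + m = u \<Longrightarrow> x \<in> unit_cube \<Longrightarrow>
     \<bar>D \<alpha> x - deriv_taylor_poly m D \<alpha> \<xi> x\<bar> \<le> real CARD('d) ^ m * c0 * norm (x - \<xi>) powr (real m + v)"
proof (induction m arbitrary: \<alpha> x)
  case 0
  then show ?case using hoelder[of \<alpha> x \<xi>] \<xi> by (simp add: deriv_taylor_poly_0)
next
  case (Suc m)
  define h where "h = norm (x - \<xi>)"
  define E where "E y = D \<alpha> y - deriv_taylor_poly (Suc m) D \<alpha> \<xi> y" for y
  define E' where "E' j y = D (\<alpha>(j := Suc (\<alpha> j))) y - deriv_taylor_poly m D (\<alpha>(j := Suc (\<alpha> j))) \<xi> y" for j y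
  have "((\<lambda>t. E (w + t *\<^sub>R axis j 1)) has_real_derivative E' j w)
      (at 0 within {t. w + t *\<^sub>R axis j 1 \<in> unit_cube})" if "w \<in> unit_cube" for j w
    unfolding E_def E'_def
  proof (rule DERIV_diff)
    show "((\<lambda>t. D \<alpha> (w + t *\<^sub>R axis j 1)) has_real_derivative D (\<alpha>(j := Suc (\<alpha> j))) w)
        (at 0 within {t. w + t *\<^sub>R axis j 1 \<in> unit_cube})"
      using pd Suc.prems(1) that unfolding partial_derivs_def by simp
  qed (rule has_field_derivative_at_within[OF deriv_taylor_poly_has_axis_derivative])
  moreover have "\<bar>E' j w\<bar> \<le> real CARD('d) ^ m * c0 * h powr (real m + v)"
    if "w \<in> unit_cube" "norm (w - \<xi>) \<le> h" for j w
  proof -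
    have "mi_order (\<alpha>(j := Suc (\<alpha> j))) + m = u" using Suc.prems(1) by (simp add: mi_order_fun_upd_Suc)
    from Suc.IH[OF this that(1)]
    have "\<bar>E' j w\<bar> \<le> real CARD('d) ^ m * c0 * norm (w - \<xi>) powr (real m + v)" unfolding E'_def .
    also have "\<dots> \<le> real CARD('d) ^ m * c0 * h powr (real m + v)"
      using that(2) v c0 by (intro mult_left_mono powr_mono2) auto
    finally show ?thesis .
  qed
  ultimately have "\<bar>E x - E \<xi>\<bar> \<le> real CARD('d) * (real CARD('d) ^ m * c0 * h powr (real m + v)) * h"
    unfolding h_def by (intro cube_mean_value_bound[OF _ _ \<xi> Suc.prems(2)])
  also have "\<dots> = real CARD('d) ^ Suc m * c0 * h powr (real (Suc m) + v)"
    using v by (cases "h = 0") (simp_all add: h_def powr_add)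
  finally show ?case unfolding E_def h_def by (simp add: deriv_taylor_poly_at_center)
qed

lemma fpart_nonneg: "0 \<le> r \<Longrightarrow> 0 \<le> fpart r"
  unfolding fpart_def ipart_def by linarith

lemma Lip_derivs_taylor_bound:
  fixes f :: "real^'d::finite \<Rightarrow> real"
  assumes L: "Lip_derivs r c0 f D" and r: "0 \<le> r" and c0: "0 \<le> c0"
    and \<xi>: "\<xi> \<in> unit_cube" and x: "x \<in> unit_cube"
  shows "\<bar>f x - taylor_poly (ipart r) D \<xi> x\<bar> \<le> real CARD('d) ^ ipart r * c0 * norm (x - \<xi>) powr r"
proof -
  have pd: "partial_derivs (ipart r) f D" using L unfolding Lip_derivs_def by auto
  have "mi_order (\<lambda>_::'d. 0::nat) + ipart r = ipart r" by (simp add: mi_order_def)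
  from taylor_remainder_bound[OF pd _ fpart_nonneg[OF r] c0 \<xi> this x] L
  have "\<bar>D (\<lambda>_. 0) x - deriv_taylor_poly (ipart r) D (\<lambda>_. 0) \<xi> x\<bar>
     \<le> real CARD('d) ^ ipart r * c0 * norm (x - \<xi>) powr (real (ipart r) + fpart r)"
    unfolding Lip_derivs_def by blast
  moreover have "D (\<lambda>_. 0) x = f x" using pd x unfolding partial_derivs_def by auto
  ultimately show ?thesis by (simp add: taylor_poly_eq_deriv_taylor_poly fpart_def)
qed

lemma norm_le_card_mult_of_components_le:
  fixes x y :: "real^'d::finite"
  assumes "\<And>i. \<bar>x$i - y$i\<bar> \<le> e"
  shows "norm (x - y) \<le> real CARD('d) * e"
proof -
  have "norm (x - y) \<le> (\<Sum>i\<in>UNIV. \<bar>(x - y)$i\<bar>)" by (rule norm_le_l1_cart)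
  also have "\<dots> \<le> (\<Sum>i\<in>(UNIV::'d set). e)" using assms by (intro sum_mono) simp
  finally show ?thesis by simp
qed

lemma zero_in_unit_cube: "0 \<in> unit_cube"
  unfolding unit_cube_def by simp

lemma bdd_above_abs_Lip_derivs:
  fixes f :: "real^'d::finite \<Rightarrow> real"
  assumes L: "Lip_derivs r c0 f D" and r: "0 \<le> r" and c0: "0 \<le> c0"
  shows "bdd_above ((\<lambda>x. \<bar>f x\<bar>) ` unit_cube)"
proof -
  define C where "C = (\<Sum>\<beta>\<in>{\<beta>::'d\<Rightarrow>nat. mi_order \<beta> \<le> ipart r}. \<bar>D \<beta> 0 / (\<Prod>i\<in>UNIV. fact (\<beta> i))\<bar>)"
  have "\<bar>f x\<bar> \<le> C + real CARD('d) ^ ipart r * c0 * real CARD('d) powr r" if x: "x \<in> unit_cube" for x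
  proof -
    have x01: "0 \<le> x$i" "x$i \<le> 1" for i using x unfolding unit_cube_def by auto
    have "\<bar>taylor_poly (ipart r) D 0 x\<bar> \<le> C"
      unfolding taylor_poly_def C_def
    proof (rule order_trans[OF sum_abs sum_mono])
      fix \<beta> :: "'d \<Rightarrow> nat"
      have "\<bar>\<Prod>i\<in>UNIV. (x$i - 0$i) ^ \<beta> i\<bar> \<le> 1"
        unfolding abs_prod using x01 by (intro prod_le_1) (auto simp: power_abs intro: power_le_one)
      then show "\<bar>D \<beta> 0 / (\<Prod>i\<in>UNIV. fact (\<beta> i)) * (\<Prod>i\<in>UNIV. (x$i - 0$i) ^ \<beta> i)\<bar>
          \<le> \<bar>D \<beta> 0 / (\<Prod>i\<in>UNIV. fact (\<beta> i))\<bar>"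
        unfolding abs_mult by (rule mult_left_le[OF _ abs_ge_zero])
    qed
    moreover have "norm (x - 0) powr r \<le> real CARD('d) powr r"
      using norm_le_card_mult_of_components_le[of x 0 1] x01 r by (intro powr_mono2) auto
    then have "real CARD('d) ^ ipart r * c0 * norm (x - 0) powr r \<le> real CARD('d) ^ ipart r * c0 * real CARD('d) powr r"
      using c0 by (intro mult_left_mono) auto
    moreover have "\<bar>f x - taylor_poly (ipart r) D 0 x\<bar> \<le> real CARD('d) ^ ipart r * c0 * norm (x - 0) powr r"
      by (rule Lip_derivs_taylor_bound[OF L r c0 zero_in_unit_cube x])
    ultimately show ?thesis by linarith
  qed
  then show ?thesis by (intro bdd_aboveI2) auto
qed

section \<open>The bump functions\<close>

lemma trap_range:
  assumes "a \<le> b" "0 < \<tau>"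
  shows "0 \<le> trap \<tau> a b t" "trap \<tau> a b t \<le> 1"
  using assms unfolding trap_def relu_def by (auto simp: max_def field_simps)

lemma trap_eq_1: "a \<le> t \<Longrightarrow> t \<le> b \<Longrightarrow> 0 < \<tau> \<Longrightarrow> trap \<tau> a b t = 1"
  unfolding trap_def relu_def by (auto simp: max_def field_simps)

lemma trap_eq_0: "a \<le> b \<Longrightarrow> 0 < \<tau> \<Longrightarrow> t \<le> a - \<tau> \<or> b + \<tau> \<le> t \<Longrightarrow> trap \<tau> a b t = 0"
  unfolding trap_def relu_def by (auto simp: max_def field_simps)

lemma Nabt_range:
  fixes x :: "real^'d::finite"
  assumes "a \<le> b" "0 < \<tau>"
  shows "0 \<le> Nabt a b \<tau> x" "Nabt a b \<tau> x \<le> 1"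
proof -
  have "(\<Sum>j\<in>UNIV. trap \<tau> a b (x$j)) \<le> (\<Sum>j\<in>(UNIV::'d set). 1)"
    using trap_range[OF assms] by (intro sum_mono) auto
  then show "0 \<le> Nabt a b \<tau> x" "Nabt a b \<tau> x \<le> 1"
    unfolding Nabt_def relu_def by auto
qed

lemma Nabt_eq_1:
  fixes x :: "real^'d::finite"
  assumes "0 < \<tau>" "\<And>i. a \<le> x$i \<and> x$i \<le> b"
  shows "Nabt a b \<tau> x = 1"
  using assms unfolding Nabt_def relu_def by (simp add: trap_eq_1)

lemma Nabt_eq_0:
  fixes x :: "real^'d::finite"
  assumes "a \<le> b" "0 < \<tau>" "x$i \<le> a - \<tau> \<or> b + \<tau> \<le> x$i"
  shows "Nabt a b \<tau> x = 0"
proof -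
  have "(\<Sum>j\<in>UNIV. trap \<tau> a b (x$j)) = trap \<tau> a b (x$i) + (\<Sum>j\<in>UNIV-{i}. trap \<tau> a b (x$j))"
    by (simp add: sum.remove)
  also have "\<dots> \<le> 0 + (\<Sum>j\<in>UNIV-{i}. 1)"
    using trap_eq_0[OF assms] trap_range[OF assms(1,2)] by (intro add_mono sum_mono) auto
  also have "\<dots> = real CARD('d) - 1"
    by (simp add: card_Diff_singleton of_nat_diff)
  finally show ?thesis unfolding Nabt_def relu_def by simp
qed

lemma N1_range: "0 < \<tau> \<Longrightarrow> 0 \<le> N1 Ns \<xi> \<tau> x \<and> N1 Ns \<xi> \<tau> x \<le> 1"
  unfolding N1_def using Nabt_range[of "-1 / (2 * real Ns)" "1 / (2 * real Ns)" \<tau> "x - \<xi>"] by simp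

lemma N1_eq_1:
  assumes "0 < \<tau>" "\<And>i. \<bar>x$i - \<xi>$i\<bar> \<le> 1 / (2 * real Ns)"
  shows "N1 Ns \<xi> \<tau> x = 1"
  unfolding N1_def
proof (rule Nabt_eq_1[OF assms(1)])
  fix i show "-1 / (2 * real Ns) \<le> (x - \<xi>)$i \<and> (x - \<xi>)$i \<le> 1 / (2 * real Ns)"
    using assms(2)[of i] by (simp add: abs_le_iff minus_divide_left[symmetric])
qed

lemma N1_neq_0_imp_near:
  assumes "0 < \<tau>" "N1 Ns \<xi> \<tau> x \<noteq> 0"
  shows "\<bar>x$i - \<xi>$i\<bar> < 1 / (2 * real Ns) + \<tau>"
proof (rule ccontr)
  assume "\<not> ?thesis"
  then have "N1 Ns \<xi> \<tau> x = 0"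
    unfolding N1_def using assms(1) by (intro Nabt_eq_0[of _ _ _ _ i]) (auto simp: abs_if split: if_splits)
  with assms(2) show False by simp
qed

lemma center_nth: "center N k $ i = (real (k i) + 1/2) / real N"
  unfolding center_def by simp

lemma finite_cube_idx: "finite (cube_idx N :: ('d::finite \<Rightarrow> nat) set)"
proof -
  have "cube_idx N = PiE UNIV (\<lambda>_::'d. {..<N})"
    unfolding cube_idx_def PiE_UNIV_domain Pi_def by auto
  then show ?thesis by (simp add: finite_PiE)
qed

lemma subcube_subset_unit_cube:
  assumes "k \<in> cube_idx N"
  shows "subcube N k \<subseteq> unit_cube"
proof
  fix x assume x: "x \<in> subcube N k"
  have "0 \<le> x$i \<and> x$i \<le> 1" for i
  proof -
    have "Suc (k i) \<le> N" using assms unfolding cube_idx_def by (simp add: Suc_le_eq)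
    then have "(real (k i) + 1) / real N \<le> 1"
      by (simp add: divide_le_eq_1 flip: of_nat_Suc of_nat_le_iff)
    moreover have "0 \<le> real (k i) / real N" by simp
    moreover have "real (k i) / real N \<le> x$i \<and> x$i \<le> (real (k i) + 1) / real N"
      using x unfolding subcube_def by simp
    ultimately show ?thesis by linarith
  qed
  then show "x \<in> unit_cube" unfolding unit_cube_def by simp
qed

lemma center_in_subcube: "0 < N \<Longrightarrow> center N k \<in> subcube N k"
  unfolding subcube_def by (simp add: center_nth divide_right_mono)

lemma center_in_unit_cube: "k \<in> cube_idx N \<Longrightarrow> center N k \<in> unit_cube"
  using subcube_subset_unit_cube center_in_subcube[of N k] unfolding cube_idx_def by (auto intro: gr0I)

lemma scaled_dist_to_center:
  "0 < Ns \<Longrightarrow> real Ns * \<bar>x$i - center Ns k $ i\<bar> = \<bar>real Ns * x$i - real (k i) - 1/2\<bar>"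
  by (simp add: center_nth abs_mult[symmetric] field_simps)

lemma N1_neq_0_imp_near_scaled:
  assumes Ns: "0 < Ns" and \<tau>: "0 < \<tau>" and active: "N1 Ns (center Ns k) \<tau> x \<noteq> 0"
  shows "\<bar>real Ns * x$i - real (k i) - 1/2\<bar> < 1/2 + real Ns * \<tau>"
proof -
  have "real Ns * \<bar>x$i - center Ns k $ i\<bar> < real Ns * (1 / (2 * real Ns) + \<tau>)"
    using N1_neq_0_imp_near[OF \<tau> active, of i] Ns by (intro mult_strict_left_mono) auto
  moreover have "real Ns * (1 / (2 * real Ns) + \<tau>) = 1/2 + real Ns * \<tau>"
    using Ns by (simp add: field_simps)
  ultimately show ?thesis using scaled_dist_to_center[OF Ns, of x i k] by linarith
qed

lemma N1_eq_1_scaled: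
  assumes Ns: "0 < Ns" and \<tau>: "0 < \<tau>" and near: "\<And>i. \<bar>real Ns * x$i - real (k i) - 1/2\<bar> \<le> 1/2"
  shows "N1 Ns (center Ns k) \<tau> x = 1"
proof (rule N1_eq_1[OF \<tau>])
  fix i
  have "real Ns * \<bar>x$i - center Ns k $ i\<bar> \<le> real Ns * (1 / (2 * real Ns))"
    using near[of i] Ns by (simp add: scaled_dist_to_center)
  then show "\<bar>x$i - center Ns k $ i\<bar> \<le> 1 / (2 * real Ns)"
    using Ns by (simp only: mult_le_cancel_left_pos of_nat_0_less_iff)
qed

text \<open>Each coordinate of an active center is one of the two integers nearest to \<open>Ns x\<^sub>i - 1/2\<close>.\<close>
lemma card_N1_neq_0_le:
  fixes x :: "real^'d::finite"
  assumes \<tau>: "0 < \<tau>" "\<tau> \<le> 1 / (2 * real Ns)"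
  shows "card {k \<in> cube_idx Ns. N1 Ns (center Ns k) \<tau> x \<noteq> 0} \<le> 2 ^ CARD('d)"
proof -
  have Ns: "0 < Ns" using \<tau> by (cases "Ns = 0") auto
  define y where "y i = real Ns * x$i - 1/2" for i
  define T where "T i = {nat \<lfloor>y i\<rfloor>, nat (\<lfloor>y i\<rfloor> + 1)}" for i
  have "{k \<in> cube_idx Ns. N1 Ns (center Ns k) \<tau> x \<noteq> 0} \<subseteq> PiE UNIV T"
  proof (clarsimp simp: PiE_UNIV_domain)
    fix k i assume "N1 Ns (center Ns k) \<tau> x \<noteq> 0"
    from N1_neq_0_imp_near_scaled[OF Ns \<tau>(1) this, of i]
    have "\<bar>y i - real (k i)\<bar> < 1"
      using \<tau>(2) Ns unfolding y_def by (simp add: field_simps)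
    then have "int (k i) = \<lfloor>y i\<rfloor> \<or> int (k i) = \<lfloor>y i\<rfloor> + 1" by linarith
    then show "k i \<in> T i" unfolding T_def by auto
  qed
  then have "card {k \<in> cube_idx Ns. N1 Ns (center Ns k) \<tau> x \<noteq> 0} \<le> card (PiE UNIV T)"
    by (intro card_mono) (auto simp: T_def intro!: finite_PiE)
  also have "\<dots> = (\<Prod>i\<in>UNIV. card (T i))" by (rule card_PiE) simp
  also have "\<dots> \<le> (\<Prod>i\<in>(UNIV::'d set). 2)"
    by (rule prod_mono) (auto simp: T_def card_insert_if)
  finally show ?thesis by simp
qed

lemma abs_sum_N1_mult_le:
  fixes x :: "real^'d::finite"
  assumes \<tau>: "0 < \<tau>" "\<tau> \<le> 1 / (2 * real Ns)" and B: "0 \<le> B"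
    and q: "\<And>k. k \<in> cube_idx Ns \<Longrightarrow> N1 Ns (center Ns k) \<tau> x \<noteq> 0 \<Longrightarrow> \<bar>q k\<bar> \<le> B"
  shows "\<bar>\<Sum>k\<in>cube_idx Ns. N1 Ns (center Ns k) \<tau> x * q k\<bar> \<le> 2 ^ CARD('d) * B"
proof -
  let ?K = "{k \<in> cube_idx Ns. N1 Ns (center Ns k) \<tau> x \<noteq> 0}"
  have "(\<Sum>k\<in>cube_idx Ns. N1 Ns (center Ns k) \<tau> x * q k) = (\<Sum>k\<in>?K. N1 Ns (center Ns k) \<tau> x * q k)"
    by (rule sum.mono_neutral_right) (auto simp: finite_cube_idx)
  also have "\<bar>\<dots>\<bar> \<le> (\<Sum>k\<in>?K. \<bar>N1 Ns (center Ns k) \<tau> x * q k\<bar>)" by (rule sum_abs)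
  also have "\<dots> \<le> (\<Sum>k\<in>?K. B)"
  proof (rule sum_mono)
    fix k assume "k \<in> ?K"
    then show "\<bar>N1 Ns (center Ns k) \<tau> x * q k\<bar> \<le> B"
      using N1_range[OF \<tau>(1), of Ns "center Ns k" x] q[of k] unfolding abs_mult
      by (auto intro: mult_le_one order_trans[OF mult_left_le_one_le])
  qed
  also have "\<dots> = real (card ?K) * B" by simp
  also have "\<dots> \<le> 2 ^ CARD('d) * B"
    using card_N1_neq_0_le[OF \<tau>, of x] B by (intro mult_right_mono) (simp_all flip: of_nat_le_iff)
  finally show ?thesis .
qed

text \<open>Off the grid hyperplanes \<open>x\<^sub>i = j/Ns\<close> exactly one bump is active, and it takes the value 1.\<close>
lemma sum_N1_eq_1_off_grid:
  fixes x :: "real^'d::finite"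
  assumes Ns: "0 < Ns" and \<tau>: "0 < \<tau>" and x: "x \<in> unit_cube"
    and off_grid: "\<And>i j. \<tau> < \<bar>x$i - real j / real Ns\<bar>"
  shows "(\<Sum>k\<in>cube_idx Ns. N1 Ns (center Ns k) \<tau> x) = 1"
proof -
  define k0 where "k0 i = nat \<lfloor>real Ns * x$i\<rfloor>" for i
  have k0: "real (k0 i) + real Ns * \<tau> < real Ns * x$i \<and> real Ns * x$i < real (k0 i) + 1 - real Ns * \<tau>" for i
  proof -
    have "0 \<le> real Ns * x$i" using x unfolding unit_cube_def by auto
    then have "real (k0 i) = of_int \<lfloor>real Ns * x$i\<rfloor>" unfolding k0_def by simp
    then have floor: "real (k0 i) \<le> real Ns * x$i" "real Ns * x$i < real (k0 i) + 1"
      using floor_correct[of "real Ns * x$i"] by linarith+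
    have "real Ns * \<tau> < \<bar>real Ns * x$i - real j\<bar>" for j
      using off_grid[of i j] Ns by (simp add: abs_mult[symmetric] field_simps)
    from this[of "k0 i"] this[of "Suc (k0 i)"] floor show ?thesis by auto
  qed
  have "k0 \<in> cube_idx Ns"
  proof -
    have "real (k0 i) < real Ns" for i
    proof -
      have "real Ns * x$i \<le> real Ns" using x unfolding unit_cube_def by (simp add: mult_left_le)
      moreover have "0 < real Ns * \<tau>" using Ns \<tau> by simp
      ultimately show ?thesis using k0[of i] by linarith
    qed
    then show ?thesis unfolding cube_idx_def by simp
  qed
  moreover have "N1 Ns (center Ns k0) \<tau> x = 1"
  proof (rule N1_eq_1_scaled[OF Ns \<tau>])
    show "\<bar>real Ns * x$i - real (k0 i) - 1/2\<bar> \<le> 1/2" for i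
      using k0[of i] Ns \<tau> mult_pos_pos[of "real Ns" \<tau>] by linarith
  qed
  moreover have "N1 Ns (center Ns k) \<tau> x = 0" if "k \<noteq> k0" for k
  proof (rule ccontr)
    assume "N1 Ns (center Ns k) \<tau> x \<noteq> 0"
    note near = N1_neq_0_imp_near_scaled[OF Ns \<tau> this]
    obtain i where "k i \<noteq> k0 i" using \<open>k \<noteq> k0\<close> by auto
    then have "real (k i) \<ge> real (k0 i) + 1 \<or> real (k i) + 1 \<le> real (k0 i)" by linarith
    then show False using near[of i] k0[of i] by linarith
  qed
  ultimately have "(\<Sum>k\<in>cube_idx Ns. N1 Ns (center Ns k) \<tau> x) = (\<Sum>k\<in>cube_idx Ns. if k = k0 then 1 else 0)"
    by (intro sum.cong) auto
  with \<open>k0 \<in> cube_idx Ns\<close> show ?thesis by (simp add: finite_cube_idx)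
qed

section \<open>Local Taylor approximation and the support of \<open>f\<close>\<close>

definition enlarged_subcube :: "nat \<Rightarrow> ('d::finite \<Rightarrow> nat) \<Rightarrow> real \<Rightarrow> (real^'d) set" where
  "enlarged_subcube N k \<delta> = cbox (\<chi> i. real (k i) / real N - \<delta>) (\<chi> i. (real (k i) + 1) / real N + \<delta>)"

lemma mem_enlarged_subcube:
  "x \<in> enlarged_subcube N k \<delta> \<longleftrightarrow> (\<forall>i. real (k i) / real N - \<delta> \<le> x$i \<and> x$i \<le> (real (k i) + 1) / real N + \<delta>)"
  unfolding enlarged_subcube_def mem_box_cart by simp

lemma subcube_subset_enlarged_subcube:
  assumes "0 \<le> \<delta>"
  shows "subcube N k \<subseteq> enlarged_subcube N k \<delta>"
proof
  fix x assume "x \<in> subcube N k"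
  then have "real (k i) / real N \<le> x$i \<and> x$i \<le> (real (k i) + 1) / real N" for i
    unfolding subcube_def by simp
  then show "x \<in> enlarged_subcube N k \<delta>"
    unfolding mem_enlarged_subcube using assms by (meson add_increasing2 diff_le_eq order_trans)
qed

lemma partial_derivs_vanish_on_open:
  fixes f :: "real^'d::finite \<Rightarrow> real"
  assumes pd: "partial_derivs u f D" and U: "open U" "U \<subseteq> unit_cube" and f0: "\<And>y. y \<in> U \<Longrightarrow> f y = 0"
  shows "mi_order \<alpha> \<le> u \<Longrightarrow> y \<in> U \<Longrightarrow> D \<alpha> y = 0"
proof (induction "mi_order \<alpha>" arbitrary: \<alpha> y)
  case 0
  then show ?case using pd f0 U(2) mi_order_eq_0_iff[of \<alpha>] unfolding partial_derivs_def by auto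
next
  case (Suc n)
  have "\<alpha> \<noteq> (\<lambda>_. 0)" using Suc.hyps(2) mi_order_eq_0_iff[of \<alpha>] by auto
  then obtain j where j: "\<alpha> j \<noteq> 0" by auto
  define \<alpha>' where "\<alpha>' = \<alpha>(j := \<alpha> j - 1)"
  have \<alpha>: "\<alpha> = \<alpha>'(j := Suc (\<alpha>' j))" using j unfolding \<alpha>'_def by auto
  have \<alpha>': "n = mi_order \<alpha>'" using Suc.hyps(2) mi_order_fun_upd_Suc[of \<alpha>' j] \<alpha> by simp
  obtain e where e: "e > 0" "ball y e \<subseteq> U" using U(1) Suc.prems(2) open_contains_ball by blast
  have line: "y + t *\<^sub>R axis j 1 \<in> U" if "t \<in> ball 0 e" for t
    using that e by (intro subsetD[OF e(2)]) (auto simp: dist_norm)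
  have "mi_order \<alpha>' < u" "y \<in> unit_cube" using Suc.hyps(2) Suc.prems \<alpha>' U(2) by auto
  then have "((\<lambda>t. D \<alpha>' (y + t *\<^sub>R axis j 1)) has_real_derivative D (\<alpha>'(j := Suc (\<alpha>' j))) y)
      (at 0 within {t. y + t *\<^sub>R axis j 1 \<in> unit_cube})"
    using pd unfolding partial_derivs_def by blast
  then have "((\<lambda>t. D \<alpha>' (y + t *\<^sub>R axis j 1)) has_real_derivative D \<alpha> y) (at 0 within ball 0 e)"
    unfolding \<alpha>[symmetric] by (rule has_field_derivative_subset) (use line U(2) in auto)
  then have deriv_at: "((\<lambda>t. D \<alpha>' (y + t *\<^sub>R axis j 1)) has_real_derivative D \<alpha> y) (at 0)"
    using e(1) by (metis at_within_open centre_in_ball open_ball)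
  have "((\<lambda>t. 0) has_real_derivative D \<alpha> y) (at 0)"
  proof (rule has_field_derivative_transform_within_open[OF deriv_at open_ball])
    show "0 \<in> ball (0::real) e" using e(1) by simp
    show "D \<alpha>' (y + t *\<^sub>R axis j 1) = 0" if "t \<in> ball 0 e" for t
      using Suc.hyps(1)[OF \<alpha>' _ line[OF that]] \<open>mi_order \<alpha>' < u\<close> by simp
  qed
  from DERIV_unique[OF this DERIV_const] show "D \<alpha> y = 0" by simp
qed

lemma taylor_poly_eq_0_if_vanishing_near:
  fixes f :: "real^'d::finite \<Rightarrow> real"
  assumes "partial_derivs u f D" "open U" "U \<subseteq> unit_cube" "\<xi> \<in> U" "\<And>y. y \<in> U \<Longrightarrow> f y = 0"
  shows "taylor_poly u D \<xi> x = 0"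
  using partial_derivs_vanish_on_open[OF assms(1-3,5) _ assms(4)] unfolding taylor_poly_def by simp

text \<open>A bump active at \<open>x\<close> has its center within \<open>1/Ns\<close> of \<open>x\<close>; if \<open>x\<close> is more than \<open>2/Ns\<close> away
  from the support of \<open>f\<close>, then \<open>f\<close> vanishes on the open cube around that center.\<close>
lemma taylor_poly_eq_0_off_support:
  fixes f :: "real^'d::finite \<Rightarrow> real"
  assumes pd: "partial_derivs u f D"
    and supp: "{y \<in> unit_cube. f y \<noteq> 0} \<subseteq> (\<Union>k\<in>S. subcube N k)"
    and \<tau>: "0 < \<tau>" "\<tau> \<le> 1 / (2 * real Ns)"
    and k': "k' \<in> cube_idx Ns" and active: "N1 Ns (center Ns k') \<tau> x \<noteq> 0"
    and far: "x \<notin> (\<Union>k\<in>S. enlarged_subcube N k (2 / real Ns))"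
  shows "taylor_poly u D (center Ns k') y = 0"
proof (rule taylor_poly_eq_0_if_vanishing_near[OF pd])
  define U where "U = box (\<chi> i. real (k' i) / real Ns) (\<chi> i. (real (k' i) + 1) / real Ns)"
  have Ns: "0 < Ns" using \<tau> by (cases "Ns = 0") auto
  have "center Ns k' $ i - 1 / (2 * real Ns) = real (k' i) / real Ns"
    "center Ns k' $ i + 1 / (2 * real Ns) = (real (k' i) + 1) / real Ns" for i
    unfolding center_nth using Ns by (simp_all add: field_simps)
  then have memU: "z \<in> U \<longleftrightarrow> (\<forall>i. \<bar>z$i - center Ns k' $ i\<bar> < 1 / (2 * real Ns))" for z
    unfolding U_def mem_box_cart abs_diff_less_iff by simp
  show "open U" unfolding U_def by (rule open_box)
  show "center Ns k' \<in> U" unfolding memU using Ns by simp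
  have "U \<subseteq> subcube Ns k'" unfolding U_def subcube_def by (auto simp: mem_box_cart less_imp_le)
  then show "U \<subseteq> unit_cube" using subcube_subset_unit_cube[OF k'] by blast
  show "f z = 0" if zU: "z \<in> U" for z
  proof (rule ccontr)
    assume "f z \<noteq> 0"
    then obtain k where "k \<in> S" "z \<in> subcube N k"
      using supp \<open>U \<subseteq> unit_cube\<close> zU by blast
    moreover have "\<bar>x$i - z$i\<bar> \<le> 2 / real Ns" for i
    proof -
      have "\<bar>x$i - center Ns k' $ i\<bar> < 1 / (2 * real Ns) + 1 / (2 * real Ns)"
        using N1_neq_0_imp_near[OF \<tau>(1) active, of i] \<tau>(2) by simp
      moreover have "\<bar>z$i - center Ns k' $ i\<bar> < 1 / (2 * real Ns)" using zU memU by blast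
      moreover have "3 * (1 / (2 * real Ns)) \<le> 2 / real Ns" using Ns by (simp add: field_simps)
      ultimately show ?thesis by linarith
    qed
    ultimately have "x \<in> enlarged_subcube N k (2 / real Ns)"
      unfolding subcube_def mem_enlarged_subcube abs_le_iff mem_Collect_eq by (smt (verit))
    with far \<open>k \<in> S\<close> show False by blast
  qed
qed

definition taylor_error_const :: "nat \<Rightarrow> real \<Rightarrow> real \<Rightarrow> real" where
  "taylor_error_const d r c0 = real d ^ ipart r * c0 * real d powr r"

lemma taylor_error_const_nonneg: "0 \<le> c0 \<Longrightarrow> 0 \<le> taylor_error_const d r c0"
  unfolding taylor_error_const_def by simp

lemma taylor_error_at_active_center:
  fixes f :: "real^'d::finite \<Rightarrow> real"
  assumes L: "Lip_derivs r c0 f D" and r: "0 \<le> r" and c0: "0 \<le> c0"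
    and \<tau>: "0 < \<tau>" "\<tau> \<le> 1 / (2 * real Ns)"
    and x: "x \<in> unit_cube" and k: "k \<in> cube_idx Ns" and active: "N1 Ns (center Ns k) \<tau> x \<noteq> 0"
  shows "\<bar>f x - taylor_poly (ipart r) D (center Ns k) x\<bar> \<le> taylor_error_const CARD('d) r c0 * real Ns powr (-r)"
proof -
  have "\<bar>x$i - center Ns k $ i\<bar> \<le> 1 / real Ns" for i
    using N1_neq_0_imp_near[OF \<tau>(1) active, of i] \<tau>(2) by simp
  then have "norm (x - center Ns k) powr r \<le> (real CARD('d) * (1 / real Ns)) powr r"
    using r by (intro powr_mono2 norm_le_card_mult_of_components_le) auto
  also have "\<dots> = real CARD('d) powr r * real Ns powr (-r)"
    by (simp add: powr_mult powr_minus_divide powr_divide)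
  finally have "real CARD('d) ^ ipart r * c0 * norm (x - center Ns k) powr r
      \<le> real CARD('d) ^ ipart r * c0 * (real CARD('d) powr r * real Ns powr (-r))"
    using c0 by (intro mult_left_mono) auto
  from order_trans[OF Lip_derivs_taylor_bound[OF L r c0 center_in_unit_cube[OF k] x] this]
  show ?thesis unfolding taylor_error_const_def by (simp only: mult.assoc)
qed

section \<open>The exceptional sets and their measure\<close>

definition slab :: "nat \<Rightarrow> ('d::finite \<Rightarrow> nat) \<Rightarrow> 'd \<Rightarrow> real \<Rightarrow> real \<Rightarrow> (real^'d) set" where
  "slab N k i c \<tau> = cbox (\<chi> l. if l = i then c - \<tau> else real (k l) / real N)
                         (\<chi> l. if l = i then c + \<tau> else (real (k l) + 1) / real N)"

definition grid_lines_meeting :: "nat \<Rightarrow> nat \<Rightarrow> real \<Rightarrow> nat \<Rightarrow> nat set" where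
  "grid_lines_meeting N Ns \<tau> m =
     {j. real m / real N - \<tau> \<le> real j / real Ns \<and> real j / real Ns \<le> (real m + 1) / real N + \<tau>}"

definition near_grid_part :: "nat \<Rightarrow> nat \<Rightarrow> real \<Rightarrow> ('d::finite \<Rightarrow> nat) set \<Rightarrow> (real^'d) set" where
  "near_grid_part N Ns \<tau> S =
     (\<Union>k\<in>S. \<Union>i. \<Union>j\<in>grid_lines_meeting N Ns \<tau> (k i). slab N k i (real j / real Ns) \<tau>)"

lemma prod_if_eq_const:
  fixes a c :: "'b::comm_monoid_mult"
  shows "(\<Prod>l\<in>(UNIV::'d::finite set). if l = i then a else c) = a * c ^ (CARD('d) - 1)"
proof -
  have "(\<Prod>l\<in>UNIV - {i}. if l = i then a else c) = (\<Prod>l\<in>UNIV - {i}. c)" by (rule prod.cong) auto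
  then show ?thesis by (simp add: prod.remove[of UNIV i] card_Diff_singleton)
qed

lemma measure_slab:
  fixes k :: "'d::finite \<Rightarrow> nat"
  assumes "0 \<le> \<tau>"
  shows "measure lborel (slab N k i c \<tau>) = 2 * \<tau> * (1 / real N) ^ (CARD('d) - 1)"
proof -
  have "(\<chi> l. if l = i then c - \<tau> else real (k l) / real N) \<in> slab N k i c \<tau>"
    using assms unfolding slab_def mem_box_cart by (auto simp: divide_right_mono)
  then have "measure lborel (slab N k i c \<tau>) = (\<Prod>l\<in>UNIV. if l = i then 2 * \<tau> else 1 / real N)"
    unfolding slab_def by (subst content_cbox_cart) (auto intro!: prod.cong simp flip: diff_divide_distrib)
  then show ?thesis by (simp add: prod_if_eq_const)
qed

lemma card_nat_in_interval_le:
  fixes lo hi :: real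
  assumes "lo \<le> hi" "0 \<le> hi"
  shows "finite {j::nat. lo \<le> real j \<and> real j \<le> hi}"
    and "real (card {j::nat. lo \<le> real j \<and> real j \<le> hi}) \<le> hi - lo + 1"
proof -
  have sub: "{j::nat. lo \<le> real j \<and> real j \<le> hi} \<subseteq> {nat \<lceil>lo\<rceil>..nat \<lfloor>hi\<rfloor>}"
    by (auto simp: le_nat_iff ceiling_le_iff nat_le_iff le_floor_iff)
  then show "finite {j::nat. lo \<le> real j \<and> real j \<le> hi}" by (rule finite_subset) simp
  then have "card {j::nat. lo \<le> real j \<and> real j \<le> hi} \<le> Suc (nat \<lfloor>hi\<rfloor>) - nat \<lceil>lo\<rceil>"
    using card_mono[OF _ sub] by simp
  moreover have "real (Suc (nat \<lfloor>hi\<rfloor>) - nat \<lceil>lo\<rceil>) \<le> hi - lo + 1"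
  proof (cases "nat \<lceil>lo\<rceil> \<le> Suc (nat \<lfloor>hi\<rfloor>)")
    case True
    have "real (nat \<lfloor>hi\<rfloor>) \<le> hi" "lo \<le> real (nat \<lceil>lo\<rceil>)" using assms(2) by linarith+
    with True show ?thesis by (simp add: of_nat_diff)
  next
    case False
    then have "Suc (nat \<lfloor>hi\<rfloor>) - nat \<lceil>lo\<rceil> = 0" by (simp only: not_le diff_is_0_eq less_imp_le)
    with assms show ?thesis by simp
  qed
  ultimately show "real (card {j::nat. lo \<le> real j \<and> real j \<le> hi}) \<le> hi - lo + 1"
    by (meson of_nat_le_iff order_trans)
qed

lemma card_grid_lines_meeting_le:
  assumes N: "0 < N" and "4 * N \<le> Ns" and \<tau>: "0 \<le> \<tau>" "\<tau> \<le> 1 / (2 * real Ns)"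
  shows "finite (grid_lines_meeting N Ns \<tau> m)"
    and "real (card (grid_lines_meeting N Ns \<tau> m)) \<le> 2 * real Ns / real N"
proof -
  define lo where "lo = real Ns * (real m / real N - \<tau>)"
  define hi where "hi = real Ns * ((real m + 1) / real N + \<tau>)"
  have Ns: "0 < real Ns" "4 * real N \<le> real Ns" using assms by simp_all
  have eq: "grid_lines_meeting N Ns \<tau> m = {j. lo \<le> real j \<and> real j \<le> hi}"
    unfolding grid_lines_meeting_def lo_def hi_def using Ns by (simp add: field_simps)
  have bounds: "lo \<le> hi" "0 \<le> hi" unfolding lo_def hi_def using N Ns \<tau> by (simp_all add: field_simps)
  show "finite (grid_lines_meeting N Ns \<tau> m)"
    unfolding eq by (rule card_nat_in_interval_le(1)[OF bounds])
  have "hi - lo + 1 = real Ns / real N + 2 * real Ns * \<tau> + 1"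
    unfolding lo_def hi_def using N by (simp add: field_simps)
  also have "\<dots> \<le> real Ns / real N + 2"
    using \<tau>(2) Ns by (simp add: field_simps)
  also have "\<dots> \<le> 2 * real Ns / real N"
    using N Ns by (simp add: field_simps)
  finally show "real (card (grid_lines_meeting N Ns \<tau> m)) \<le> 2 * real Ns / real N"
    unfolding eq using card_nat_in_interval_le(2)[OF bounds] by linarith
qed

lemma near_grid_part_fmeasurable:
  assumes "finite S" "0 < N" "4 * N \<le> Ns" "0 \<le> \<tau>" "\<tau> \<le> 1 / (2 * real Ns)"
  shows "near_grid_part N Ns \<tau> S \<in> fmeasurable lborel"
  unfolding near_grid_part_def slab_def
  using assms card_grid_lines_meeting_le(1)[OF assms(2-5)]
  by (intro fmeasurable.finite_UN fmeasurable_cbox) auto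

lemma measure_near_grid_part_le:
  fixes S :: "('d::finite \<Rightarrow> nat) set"
  assumes S: "finite S" and N: "0 < N" and Ns: "4 * N \<le> Ns" and \<tau>: "0 \<le> \<tau>" "\<tau> \<le> 1 / (2 * real Ns)"
  shows "measure lborel (near_grid_part N Ns \<tau> S)
           \<le> 4 * real CARD('d) * real Ns * \<tau> * real (card S) / real N ^ CARD('d)"
proof -
  define w where "w = 2 * \<tau> * (1 / real N) ^ (CARD('d) - 1)"
  let ?J = "\<lambda>k i. grid_lines_meeting N Ns \<tau> (k i)"
  have fin: "finite (?J k i)" for k i using card_grid_lines_meeting_le(1)[OF N Ns \<tau>] .
  have "measure lborel (near_grid_part N Ns \<tau> S)
      \<le> (\<Sum>k\<in>S. measure lborel (\<Union>i. \<Union>j\<in>?J k i. slab N k i (real j / real Ns) \<tau>))"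
    unfolding near_grid_part_def using fin by (intro measure_UNION_le S) (auto simp: slab_def)
  also have "\<dots> \<le> (\<Sum>k\<in>S. \<Sum>i\<in>UNIV. measure lborel (\<Union>j\<in>?J k i. slab N k i (real j / real Ns) \<tau>))"
    using fin by (intro sum_mono measure_UNION_le) (auto simp: slab_def)
  also have "\<dots> \<le> (\<Sum>k\<in>S. \<Sum>i\<in>UNIV. \<Sum>j\<in>?J k i. measure lborel (slab N k i (real j / real Ns) \<tau>))"
    using fin by (intro sum_mono measure_UNION_le) (auto simp: slab_def)
  also have "\<dots> = (\<Sum>k\<in>S. \<Sum>i\<in>UNIV. real (card (?J k i)) * w)"
    unfolding w_def using \<tau> by (simp add: measure_slab)
  also have "\<dots> \<le> (\<Sum>k\<in>S. \<Sum>i\<in>(UNIV::'d set). 2 * real Ns / real N * w)"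
    using card_grid_lines_meeting_le(2)[OF N Ns \<tau>] \<tau> unfolding w_def
    by (intro sum_mono mult_right_mono) auto
  also have "\<dots> = 4 * real CARD('d) * real Ns * \<tau> * real (card S) / real N ^ CARD('d)"
  proof -
    have "real N ^ CARD('d) = real N * real N ^ (CARD('d) - 1)"
      by (simp flip: power_Suc)
    then show ?thesis unfolding w_def using N by (simp add: power_one_over field_simps)
  qed
  finally show ?thesis .
qed

lemma measure_enlarged_subcube:
  assumes "0 \<le> \<delta>"
  shows "measure lborel (enlarged_subcube N k \<delta> :: (real^'d::finite) set) = (1 / real N + 2 * \<delta>) ^ CARD('d)"
proof -
  have "real (k i) / real N \<le> (real (k i) + 1) / real N" for i by (simp add: divide_right_mono)
  then have "(\<chi> i. real (k i) / real N - \<delta>) \<in> (enlarged_subcube N k \<delta> :: (real^'d) set)"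
    using assms unfolding mem_enlarged_subcube by simp (smt (verit))
  then show ?thesis
    unfolding enlarged_subcube_def by (subst content_cbox_cart) (auto simp: add.commute simp flip: diff_divide_distrib)
qed

lemma measure_union_enlarged_subcube_le:
  fixes S :: "('d::finite \<Rightarrow> nat) set"
  assumes "finite S" "0 \<le> \<delta>"
  shows "measure lborel (\<Union>k\<in>S. enlarged_subcube N k \<delta>) \<le> real (card S) * (1 / real N + 2 * \<delta>) ^ CARD('d)"
proof -
  have "measure lborel (\<Union>k\<in>S. enlarged_subcube N k \<delta>) \<le> (\<Sum>k\<in>S. measure lborel (enlarged_subcube N k \<delta>))"
    using assms by (intro measure_UNION_le) (auto simp: enlarged_subcube_def)
  then show ?thesis using assms by (simp add: measure_enlarged_subcube)
qed

lemma le_half_mesh_of_le_sparsity_bound: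
  fixes \<tau> p r :: real
  assumes pr: "0 \<le> p * r" and N: "0 < N" and Ns: "0 < Ns" and s: "s \<le> N ^ n"
    and \<tau>: "\<tau> \<le> real s / (2 * real N ^ n * real Ns powr (1 + p * r))"
  shows "\<tau> \<le> 1 / (2 * real Ns)"
proof -
  have "real s / real N ^ n \<le> 1" using s N by (simp flip: of_nat_le_iff)
  moreover have "1 \<le> real Ns powr (p * r)" using Ns pr by (intro ge_one_powr_ge_zero) auto
  ultimately have "(real s / real N ^ n) / (2 * real Ns * real Ns powr (p * r)) \<le> 1 / (2 * real Ns)"
    using Ns by (intro frac_le) auto
  moreover have "real s / (2 * real N ^ n * real Ns powr (1 + p * r))
      = (real s / real N ^ n) / (2 * real Ns * real Ns powr (p * r))"
    using Ns by (simp add: powr_add)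
  ultimately show ?thesis using \<tau> by linarith
qed

lemma measure_near_grid_part_le_sparsity_bound:
  fixes S :: "('d::finite \<Rightarrow> nat) set"
  assumes S: "finite S" "card S \<le> s" and N: "1 \<le> N" and s: "s \<le> N ^ CARD('d)" and Ns: "4 * N \<le> Ns"
    and pr: "0 \<le> p * r"
    and \<tau>: "0 < \<tau>" "\<tau> \<le> real s / (2 * real N ^ CARD('d) * real Ns powr (1 + p * r))"
  shows "measure lborel (near_grid_part N Ns \<tau> S)
           \<le> 2 * real CARD('d) * (real s / real N ^ CARD('d)) * (real Ns powr (-r)) powr p"
proof -
  define d where "d = real CARD('d)"
  define q where "q = real s / real N ^ CARD('d)"
  have X: "1 \<le> real Ns" "0 < real N" using N Ns by simp_all
  have q: "0 \<le> q" "q \<le> 1" unfolding q_def using s N by (simp_all flip: of_nat_le_iff)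
  have \<tau>_le: "\<tau> \<le> 1 / (2 * real Ns)"
    using pr N Ns s \<tau>(2) by (intro le_half_mesh_of_le_sparsity_bound) auto
  have "measure lborel (near_grid_part N Ns \<tau> S) \<le> 4 * d * real Ns * \<tau> * real (card S) / real N ^ CARD('d)"
    unfolding d_def using S N Ns \<tau>(1) \<tau>_le by (intro measure_near_grid_part_le) auto
  also have "\<dots> \<le> 4 * d * real Ns * \<tau> * q"
    unfolding q_def using S(2) \<tau> X by (simp add: d_def divide_right_mono)
  also have "\<dots> \<le> 4 * d * real Ns * (q / (2 * real Ns * real Ns powr (p * r))) * q"
    using \<tau>(2) q X unfolding q_def by (intro mult_right_mono mult_left_mono) (auto simp: d_def powr_add field_simps)
  also have "\<dots> = 2 * d * (q * q) / real Ns powr (p * r)"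
    using X by (simp add: field_simps)
  also have "\<dots> \<le> 2 * d * q / real Ns powr (p * r)"
    using mult_left_le[OF q(2) q(1)] by (intro divide_right_mono mult_left_mono) (auto simp: d_def)
  also have "\<dots> = 2 * d * q * (real Ns powr (-r)) powr p"
    unfolding powr_powr by (simp add: powr_minus_divide mult.commute)
  finally show ?thesis unfolding d_def q_def .
qed

lemma measure_support_neighbourhood_le:
  fixes S :: "('d::finite \<Rightarrow> nat) set"
  assumes S: "finite S" "card S \<le> s" and N: "1 \<le> N" and Ns: "4 * N \<le> Ns"
  shows "measure lborel (\<Union>k\<in>S. enlarged_subcube N k (2 / real Ns)) \<le> 2 ^ CARD('d) * (real s / real N ^ CARD('d))"
proof -
  have "measure lborel (\<Union>k\<in>S. enlarged_subcube N k (2 / real Ns)) \<le> real (card S) * (1 / real N + 4 / real Ns) ^ CARD('d)"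
    using measure_union_enlarged_subcube_le[OF S(1), of "2 / real Ns" N] by simp
  also have "\<dots> \<le> real s * (2 / real N) ^ CARD('d)"
    using S(2) N Ns by (intro mult_mono power_mono) (auto simp: field_simps)
  finally show ?thesis by (simp add: power_divide mult.commute)
qed

section \<open>The approximation error\<close>

lemma f_minus_N2_eq:
  "f x - N2 u D Ns \<tau> x = f x * (1 - (\<Sum>k\<in>cube_idx Ns. N1 Ns (center Ns k) \<tau> x))
     + (\<Sum>k\<in>cube_idx Ns. N1 Ns (center Ns k) \<tau> x * (f x - taylor_poly u D (center Ns k) x))"
  unfolding N2_def by (simp add: algebra_simps sum_subtractf sum_distrib_left)

text \<open>Where the bumps do not sum to 1, \<open>x\<close> lies within \<open>\<tau>\<close> of a grid hyperplane.\<close>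
lemma abs_partition_defect_le:
  fixes f :: "real^'d::finite \<Rightarrow> real"
  assumes supp: "{y \<in> unit_cube. f y \<noteq> 0} \<subseteq> (\<Union>k\<in>S. subcube N k)"
    and \<tau>: "0 < \<tau>" "\<tau> \<le> 1 / (2 * real Ns)" and x: "x \<in> unit_cube" and M: "\<bar>f x\<bar> \<le> M"
  shows "\<bar>f x * (1 - (\<Sum>k\<in>cube_idx Ns. N1 Ns (center Ns k) \<tau> x))\<bar>
           \<le> (1 + 2 ^ CARD('d)) * M * indicator (near_grid_part N Ns \<tau> S) x"
proof -
  let ?\<sigma> = "\<Sum>k\<in>cube_idx Ns. N1 Ns (center Ns k) \<tau> x"
  have Ns: "0 < Ns" using \<tau> by (cases "Ns = 0") auto
  have "\<bar>?\<sigma>\<bar> \<le> 2 ^ CARD('d)"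
    using abs_sum_N1_mult_le[OF \<tau>, of 1 x "\<lambda>_. 1"] by simp
  then have defect: "\<bar>1 - ?\<sigma>\<bar> \<le> 1 + 2 ^ CARD('d)" by linarith
  show ?thesis
  proof (cases "f x = 0 \<or> ?\<sigma> = 1")
    case True
    then show ?thesis using M by (auto intro: mult_nonneg_nonneg order_trans[OF abs_ge_zero])
  next
    case False
    then obtain k where k: "k \<in> S" "x \<in> subcube N k" using supp x by blast
    obtain i j where ij: "\<bar>x$i - real j / real Ns\<bar> \<le> \<tau>"
      using sum_N1_eq_1_off_grid[OF Ns \<tau>(1) x] False by (meson not_le)
    have ki: "real (k i) / real N \<le> x$i" "x$i \<le> (real (k i) + 1) / real N"
      using k(2) unfolding subcube_def by simp_all
    have "j \<in> grid_lines_meeting N Ns \<tau> (k i)"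
      using ki ij unfolding grid_lines_meeting_def abs_le_iff by (intro CollectI conjI) linarith+
    moreover have "x \<in> slab N k i (real j / real Ns) \<tau>"
      using k(2) ij unfolding slab_def subcube_def mem_box_cart abs_le_iff by auto
    ultimately have "x \<in> near_grid_part N Ns \<tau> S" unfolding near_grid_part_def using k(1) by blast
    then show ?thesis
      using M defect by (simp add: abs_mult mult_mono mult.commute)
  qed
qed

lemma abs_local_taylor_error_le:
  fixes f :: "real^'d::finite \<Rightarrow> real"
  assumes L: "Lip_derivs r c0 f D" and r: "0 \<le> r" and c0: "0 \<le> c0"
    and supp: "{y \<in> unit_cube. f y \<noteq> 0} \<subseteq> (\<Union>k\<in>S. subcube N k)"
    and \<tau>: "0 < \<tau>" "\<tau> \<le> 1 / (2 * real Ns)" and x: "x \<in> unit_cube"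
  shows "\<bar>\<Sum>k\<in>cube_idx Ns. N1 Ns (center Ns k) \<tau> x * (f x - taylor_poly (ipart r) D (center Ns k) x)\<bar>
     \<le> 2 ^ CARD('d) * (taylor_error_const CARD('d) r c0 * real Ns powr (-r))
        * indicator (\<Union>k\<in>S. enlarged_subcube N k (2 / real Ns)) x"
proof (cases "x \<in> (\<Union>k\<in>S. enlarged_subcube N k (2 / real Ns))")
  case True
  then show ?thesis
    using taylor_error_at_active_center[OF L r c0 \<tau> x] taylor_error_const_nonneg[OF c0]
    by (simp add: abs_sum_N1_mult_le[OF \<tau>])
next
  case False
  have "f x = 0"
    using supp x subcube_subset_enlarged_subcube[of "2 / real Ns" N] False by fastforce
  moreover have "taylor_poly (ipart r) D (center Ns k) x = 0"
    if "k \<in> cube_idx Ns" "N1 Ns (center Ns k) \<tau> x \<noteq> 0" for k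
    using L supp \<tau> that False unfolding Lip_derivs_def by (intro taylor_poly_eq_0_off_support) auto
  ultimately have "(\<Sum>k\<in>cube_idx Ns. N1 Ns (center Ns k) \<tau> x * (f x - taylor_poly (ipart r) D (center Ns k) x)) = 0"
    by (intro sum.neutral) auto
  then show ?thesis using False by simp
qed

lemma abs_N2_le:
  fixes f :: "real^'d::finite \<Rightarrow> real"
  assumes L: "Lip_derivs r c0 f D" and r: "0 \<le> r" and c0: "0 \<le> c0"
    and \<tau>: "0 < \<tau>" "\<tau> \<le> 1 / (2 * real Ns)" and x: "x \<in> unit_cube" and M: "\<bar>f x\<bar> \<le> M"
  shows "\<bar>N2 (ipart r) D Ns \<tau> x\<bar> \<le> 2 ^ CARD('d) * (M + taylor_error_const CARD('d) r c0)"
  unfolding N2_def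
proof (subst mult.commute, rule abs_sum_N1_mult_le[OF \<tau>])
  define E where "E = taylor_error_const CARD('d) r c0"
  have "1 \<le> real Ns" using \<tau> by (cases "Ns = 0") auto
  then have "1 \<le> real Ns powr r" using r by (rule ge_one_powr_ge_zero)
  then have "real Ns powr (-r) \<le> 1" by (auto simp: powr_minus_divide divide_le_eq_1)
  moreover have "0 \<le> E" unfolding E_def using c0 by (rule taylor_error_const_nonneg)
  ultimately have E: "E * real Ns powr (-r) \<le> E" "0 \<le> E" by (simp_all add: mult_left_le)
  show "0 \<le> M + E" using M E(2) by linarith
  fix k assume "k \<in> cube_idx Ns" "N1 Ns (center Ns k) \<tau> x \<noteq> 0"
  from taylor_error_at_active_center[OF L r c0 \<tau> x this] E M
  show "\<bar>taylor_poly (ipart r) D (center Ns k) x\<bar> \<le> M + E" unfolding E_def by linarith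
qed

lemma abs_f_minus_N2_le:
  fixes f :: "real^'d::finite \<Rightarrow> real"
  assumes L: "Lip_derivs r c0 f D" and r: "0 \<le> r" and c0: "0 \<le> c0"
    and supp: "{y \<in> unit_cube. f y \<noteq> 0} \<subseteq> (\<Union>k\<in>S. subcube N k)"
    and \<tau>: "0 < \<tau>" "\<tau> \<le> 1 / (2 * real Ns)" and x: "x \<in> unit_cube" and M: "\<bar>f x\<bar> \<le> M"
  shows "\<bar>f x - N2 (ipart r) D Ns \<tau> x\<bar>
     \<le> (1 + 2 ^ CARD('d)) * M * indicator (near_grid_part N Ns \<tau> S) x
       + 2 ^ CARD('d) * (taylor_error_const CARD('d) r c0 * real Ns powr (-r))
         * indicator (\<Union>k\<in>S. enlarged_subcube N k (2 / real Ns)) x"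
  unfolding f_minus_N2_eq
  using abs_partition_defect_le[OF supp \<tau> x M]
    abs_local_taylor_error_le[OF L r c0 supp \<tau> x]
  by (rule order_trans[OF abs_triangle_ineq add_mono])

lemma add_powr_le_two_powr:
  fixes a b p :: real
  assumes "0 \<le> a" "0 \<le> b" "0 < p"
  shows "(a + b) powr p \<le> 2 powr p * (a powr p + b powr p)"
proof -
  have "(a + b) powr p \<le> (2 * max a b) powr p" using assms by (intro powr_mono2) auto
  also have "\<dots> = 2 powr p * max a b powr p" using assms by (simp add: powr_mult)
  also have "max a b powr p \<le> a powr p + b powr p" by (cases "a \<le> b") (auto simp: max_def)
  finally show ?thesis by simp
qed

lemma Lp_norm_cube_le_of_indicator_bound:
  fixes g :: "real^'d::finite \<Rightarrow> real"
  assumes p: "0 < p" and A: "0 \<le> A" and B: "0 \<le> B"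
    and L: "L \<in> fmeasurable lborel" and R: "R \<in> fmeasurable lborel"
    and bound: "\<And>x. x \<in> unit_cube \<Longrightarrow> \<bar>g x\<bar> \<le> A * indicator L x + B * indicator R x"
  shows "Lp_norm_cube p g \<le> 2 * (A powr p * measure lborel L + B powr p * measure lborel R) powr (1/p)"
proof -
  define H where "H x = 2 powr p * (A powr p * indicator L x + B powr p * indicator R x)" for x :: "real^'d"
  have iL: "integrable lborel (indicator L :: real^'d \<Rightarrow> real)"
    and iR: "integrable lborel (indicator R :: real^'d \<Rightarrow> real)"
    using L R unfolding fmeasurable_def by (auto intro: integrable_real_indicator)
  then have H_integrable: "integrable lborel H"
    unfolding H_def by (auto intro!: integrable_add integrable_mult_right)
  have "(LINT x:unit_cube|lborel. \<bar>g x\<bar> powr p) \<le> integral\<^sup>L lborel H"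
    unfolding set_lebesgue_integral_def
  proof (rule integral_mono'[OF H_integrable])
    fix x :: "real^'d"
    have "\<bar>g x\<bar> powr p \<le> H x" if "x \<in> unit_cube"
    proof -
      have "\<bar>g x\<bar> powr p \<le> (A * indicator L x + B * indicator R x) powr p"
        using bound[OF that] p by (intro powr_mono2) auto
      also have "\<dots> \<le> 2 powr p * ((A * indicator L x) powr p + (B * indicator R x) powr p)"
        using A B p by (intro add_powr_le_two_powr) auto
      also have "(A * indicator L x) powr p = A powr p * indicator L x"
        using p by (simp add: indicator_def)
      also have "(B * indicator R x) powr p = B powr p * indicator R x"
        using p by (simp add: indicator_def)
      finally show ?thesis unfolding H_def .
    qed
    then show "indicator unit_cube x *\<^sub>R \<bar>g x\<bar> powr p \<le> H x"
      unfolding H_def using A B by (cases "x \<in> unit_cube") auto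
  qed (use A B in \<open>auto simp: H_def\<close>)
  also have "integral\<^sup>L lborel H = 2 powr p * (A powr p * measure lborel L + B powr p * measure lborel R)"
    unfolding H_def using iL iR by (simp add: integral_add)
  finally have "Lp_norm_cube p g \<le> (2 powr p * (A powr p * measure lborel L + B powr p * measure lborel R)) powr (1/p)"
    unfolding Lp_norm_cube_def using p by (intro powr_mono2) (auto simp: set_lebesgue_integral_def)
  also have "\<dots> = 2 * (A powr p * measure lborel L + B powr p * measure lborel R) powr (1/p)"
    using p by (simp add: powr_mult powr_powr)
  finally show ?thesis .
qed

lemma powr_two_terms_le:
  fixes p A B Z W mL mR cL cR q :: real
  assumes p: "1 \<le> p" and A: "0 \<le> A" "A \<le> Z" and B: "0 \<le> B" "B \<le> Z * W" and W: "0 \<le> W" and q: "0 \<le> q"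
    and mL: "0 \<le> mL" "mL \<le> cL * q * W powr p" and mR: "0 \<le> mR" "mR \<le> cR * q" and c: "1 \<le> cL + cR"
  shows "(A powr p * mL + B powr p * mR) powr (1/p) \<le> (cL + cR) * Z * W * q powr (1/p)"
proof -
  have Z: "0 \<le> Z" using A by simp
  have "A powr p * mL \<le> Z powr p * (cL * q * W powr p)"
    using A mL p by (intro mult_mono powr_mono2) auto
  moreover have "B powr p * mR \<le> (Z * W) powr p * (cR * q)"
    using B mR p by (intro mult_mono powr_mono2) auto
  ultimately have "A powr p * mL + B powr p * mR \<le> ((cL + cR) * q) * (Z * W) powr p"
    using Z W by (simp add: powr_mult algebra_simps)
  then have "(A powr p * mL + B powr p * mR) powr (1/p) \<le> (((cL + cR) * q) * (Z * W) powr p) powr (1/p)"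
    using A B mL mR p by (intro powr_mono2) auto
  also have "\<dots> = (cL + cR) powr (1/p) * q powr (1/p) * (Z * W)"
    using c q Z W p by (simp add: powr_mult powr_powr)
  also have "(cL + cR) powr (1/p) \<le> (cL + cR) powr 1"
    using c p by (intro powr_mono) auto
  finally show ?thesis
    using c q Z W by (simp add: mult_right_mono mult_nonneg_nonneg algebra_simps)
qed

lemma Lp_norm_cube_f_minus_N2_le:
  fixes f :: "real^'d::finite \<Rightarrow> real"
  assumes L: "Lip_derivs r c0 f D" and r: "0 \<le> r" and c0: "0 \<le> c0" and sparse: "sparse N s f"
    and p: "1 \<le> p" and N: "1 \<le> N" and s: "s \<le> N ^ CARD('d)" and Ns: "4 * N \<le> Ns"
    and \<tau>: "0 < \<tau>" "\<tau> \<le> real s / (2 * real N ^ CARD('d) * real Ns powr (1 + p * r))"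
    and M: "\<And>x. x \<in> unit_cube \<Longrightarrow> \<bar>f x\<bar> \<le> M"
  shows "Lp_norm_cube p (\<lambda>x. f x - N2 (ipart r) D Ns \<tau> x)
     \<le> 2 * (2 * real CARD('d) + 2 ^ CARD('d))
         * ((1 + 2 ^ CARD('d)) * (M + taylor_error_const CARD('d) r c0))
         * real Ns powr (-r) * (real s / real N ^ CARD('d)) powr (1 / p)"
proof -
  define E where "E = taylor_error_const CARD('d) r c0"
  define W where "W = real Ns powr (-r)"
  obtain S where S: "S \<subseteq> cube_idx N" "card S \<le> s"
    and supp: "{y \<in> unit_cube. f y \<noteq> 0} \<subseteq> (\<Union>k\<in>S. subcube N k)"
    using sparse unfolding sparse_def subset_iff mem_Collect_eq by blast
  have finS: "finite S" using S(1) finite_cube_idx by (rule finite_subset)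
  have pr: "0 \<le> p * r" using p r by simp
  have \<tau>_le: "\<tau> \<le> 1 / (2 * real Ns)"
    using pr N Ns s \<tau>(2) by (intro le_half_mesh_of_le_sparsity_bound) auto
  have E: "0 \<le> E" unfolding E_def using c0 by (rule taylor_error_const_nonneg)
  have M0: "0 \<le> M" using M[OF zero_in_unit_cube] by linarith
  have "Lp_norm_cube p (\<lambda>x. f x - N2 (ipart r) D Ns \<tau> x)
     \<le> 2 * (((1 + 2 ^ CARD('d)) * M) powr p * measure lborel (near_grid_part N Ns \<tau> S)
           + (2 ^ CARD('d) * E * W) powr p * measure lborel (\<Union>k\<in>S. enlarged_subcube N k (2 / real Ns))) powr (1/p)"
  proof (rule Lp_norm_cube_le_of_indicator_bound)
    show "0 < p" "0 \<le> (1 + 2 ^ CARD('d)) * M" "0 \<le> 2 ^ CARD('d) * E * W"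
      using p M0 E by (simp_all add: W_def)
    show "near_grid_part N Ns \<tau> S \<in> fmeasurable lborel"
      using finS N Ns \<tau>(1) \<tau>_le by (intro near_grid_part_fmeasurable) auto
    show "(\<Union>k\<in>S. enlarged_subcube N k (2 / real Ns)) \<in> fmeasurable lborel"
      unfolding enlarged_subcube_def using finS by (intro fmeasurable.finite_UN fmeasurable_cbox)
    show "\<bar>f x - N2 (ipart r) D Ns \<tau> x\<bar> \<le> (1 + 2 ^ CARD('d)) * M * indicator (near_grid_part N Ns \<tau> S) x
        + 2 ^ CARD('d) * E * W * indicator (\<Union>k\<in>S. enlarged_subcube N k (2 / real Ns)) x"
      if "x \<in> unit_cube" for x
      using abs_f_minus_N2_le[OF L r c0 supp \<tau>(1) \<tau>_le that M[OF that]]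
      unfolding E_def W_def by (simp only: mult.assoc)
  qed
  also have "\<dots> \<le> 2 * ((2 * real CARD('d) + 2 ^ CARD('d)) * ((1 + 2 ^ CARD('d)) * (M + E)) * W
                        * (real s / real N ^ CARD('d)) powr (1/p))"
    using measure_near_grid_part_le_sparsity_bound[OF finS S(2) N s Ns pr \<tau>]
      measure_support_neighbourhood_le[OF finS S(2) N Ns] p M0 E s N
    by (intro mult_left_mono powr_two_terms_le)
       (auto simp: W_def algebra_simps intro: add_increasing2 simp flip: of_nat_le_iff)
  finally show ?thesis unfolding E_def W_def by (simp add: algebra_simps)
qed

theorem lemma2:
  fixes r c0 :: real
  assumes "r > 0" and "c0 > 0"
  shows "\<exists>c2 c3 :: real \<Rightarrow> real. \<forall>(p::real) (N::nat) (s::nat) (Ns::nat)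
           (f :: real^'d::finite \<Rightarrow> real) D (\<tau>::real).
     1 \<le> p \<and> 1 \<le> N \<and> 1 \<le> s \<and> s \<le> N ^ CARD('d) \<and> 4 * N \<le> Ns \<and>
     Lip_derivs r c0 f D \<and> sparse N s f \<and>
     0 < \<tau> \<and> \<tau> \<le> real s / (2 * real N ^ CARD('d) * real Ns powr (1 + p * r))
     \<longrightarrow>
     Lp_norm_cube p (\<lambda>x. f x - N2 (ipart r) D Ns \<tau> x)
        \<le> c2 (SUP x\<in>unit_cube. \<bar>f x\<bar>) * real Ns powr (- r)
           * (real s / real N ^ CARD('d)) powr (1 / p) \<and>
     (\<forall>x\<in>unit_cube. \<bar>N2 (ipart r) D Ns \<tau> x\<bar> \<le> c3 (SUP x\<in>unit_cube. \<bar>f x\<bar>))"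
proof -
  define E where "E = taylor_error_const CARD('d) r c0"
  have r: "0 \<le> r" and c0: "0 \<le> c0" using assms by simp_all
  show ?thesis
  proof (rule exI[of _ "\<lambda>M. 2 * (2 * real CARD('d) + 2 ^ CARD('d)) * ((1 + 2 ^ CARD('d)) * (M + E))"],
      rule exI[of _ "\<lambda>M. 2 ^ CARD('d) * (M + E)"], intro allI impI, elim conjE, intro conjI)
    fix p N s Ns f D \<tau>
    assume p: "1 \<le> p" and N: "1 \<le> N" and "1 \<le> s" and s: "s \<le> N ^ CARD('d)" and Ns: "4 * N \<le> Ns"
      and L: "Lip_derivs r c0 (f :: real^'d \<Rightarrow> real) D" and sparse: "sparse N s f"
      and \<tau>: "0 < \<tau>" "\<tau> \<le> real s / (2 * real N ^ CARD('d) * real Ns powr (1 + p * r))"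
    let ?M = "SUP x\<in>unit_cube. \<bar>f x\<bar>"
    have M: "\<bar>f x\<bar> \<le> ?M" if "x \<in> unit_cube" for x
      using that bdd_above_abs_Lip_derivs[OF L r c0] by (rule cSUP_upper)
    have "\<tau> \<le> 1 / (2 * real Ns)"
      using p r N Ns s \<tau>(2) by (intro le_half_mesh_of_le_sparsity_bound) auto
    show "Lp_norm_cube p (\<lambda>x. f x - N2 (ipart r) D Ns \<tau> x)
        \<le> 2 * (2 * real CARD('d) + 2 ^ CARD('d)) * ((1 + 2 ^ CARD('d)) * (?M + E))
          * real Ns powr (- r) * (real s / real N ^ CARD('d)) powr (1 / p)"
      using Lp_norm_cube_f_minus_N2_le[OF L r c0 sparse p N s Ns \<tau> M] unfolding E_def .
    show "\<forall>x\<in>unit_cube. \<bar>N2 (ipart r) D Ns \<tau> x\<bar> \<le> 2 ^ CARD('d) * (?M + E)"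
      using abs_N2_le[OF L r c0 \<tau>(1) \<open>\<tau> \<le> 1 / (2 * real Ns)\<close> _ M] unfolding E_def by blast
  qed
qed

end
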